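(* Let $\hat A$ be a collection of pairwise disjoint nonempty connected subsets of $S^1$ with $|\hat A|\ge 3$ such that $\bigcup_{J\in\hat A}J$ is dense in $S^1$ and each $J\in\hat A$ is either a single point or an open interval. Let $h:\hat A\to\hat A$ be an order preserving bijection, and let $g_1,g_2:S^1\to S^1$ be orientation preserving homeomorphisms both compatible with $h$. Then $g_1$ and $g_2$ have the same rotation number.
   Context: A bijection $h:\hat A\to\hat A$ of a collection of pairwise disjoint subsets of $S^1$ is order preserving if there is a homeomorphism $g:S^1\to S^1$ with $g(J)=h(J)$ for all $J\in\hat A$; such $g$ is called compatible with $h$. The rotation number of an orientation preserving homeomorphism $g$ of $S^1$ is $\lim_{n\to\infty}G^n(x)/n \pmod 1$, where $G:\mathbb{R}\to\mathbb{R}$ is any lift of $g$ under $\theta\mapsto e^{2\pi i\theta}$ and $x\in\mathbb{R}$ is arbitrary (this is well defined modulo $1$). *)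

theory Defs
  imports "HOL-Analysis.Analysis"
begin

abbreviation S1 :: "complex set" where
  "S1 \<equiv> sphere 0 1"

definition expc :: "real \<Rightarrow> complex" where
  "expc x = cis (2 * pi * x)"

definition open_arc :: "complex set \<Rightarrow> bool" where
  "open_arc J \<longleftrightarrow> (\<exists>a b. a < b \<and> b - a < 1 \<and> J = expc ` {a<..<b})"

definition is_lift :: "(complex \<Rightarrow> complex) \<Rightarrow> (real \<Rightarrow> real) \<Rightarrow> bool" where
  "is_lift g G \<longleftrightarrow> continuous_on UNIV G \<and> (\<forall>x. g (expc x) = expc (G x))"

definition circle_homeo :: "(complex \<Rightarrow> complex) \<Rightarrow> bool" where
  "circle_homeo g \<longleftrightarrow> (\<exists>g'. homeomorphism S1 S1 g g')"

definition orientation_preserving :: "(complex \<Rightarrow> complex) \<Rightarrow> bool" where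
  "orientation_preserving g \<longleftrightarrow> circle_homeo g \<and> (\<exists>G. is_lift g G \<and> strict_mono G)"

text \<open>Rotation number: lim G^n(x)/n (mod 1), for an arbitrary lift G and point x (here x = 0).\<close>
definition rotation_number :: "(complex \<Rightarrow> complex) \<Rightarrow> real" where
  "rotation_number g = frac (lim (\<lambda>n. (((SOME G. is_lift g G) ^^ n) 0) / real n))"

definition compatible :: "(complex \<Rightarrow> complex) \<Rightarrow> complex set set \<Rightarrow> (complex set \<Rightarrow> complex set) \<Rightarrow> bool" where
  "compatible g A h \<longleftrightarrow> circle_homeo g \<and> (\<forall>J\<in>A. g ` J = h J)"

definition order_preserving :: "complex set set \<Rightarrow> (complex set \<Rightarrow> complex set) \<Rightarrow> bool" where
  "order_preserving A h \<longleftrightarrow> bij_betw h A A \<and> (\<exists>g. compatible g A h)"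

end

(*
  The pieces J of A lift to pairwise disjoint intervals of length < 1,
  permuted by translation by 1, and an increasing lift of a homeomorphism compatible with h
  sends the lifted pieces over J to lifted pieces over h J. Choose lifts F1 of g1 and F2 of g2
  such that F1 x0 and F2 x0 lie in one lifted piece for some x0 over A. For every y over A,
  F1 y and F2 y then lie in lifted pieces over the same h J, i.e. in integer translates of each
  other; as F1 and F2 are increasing and commute with translation by 1, a nontrivial translate
  would interleave with the piece through F1 x0 or F1 (x0 + 1), which forces F1 y and F2 y into
  one piece anyway. So the orbits of x0 under F1 and F2 stay in common lifted pieces, at
  distance < 1, and the rotation numbers agree.
*)

theory Submission
  imports Defs
begin

lemma expc_eq_iff: "expc x = expc y \<longleftrightarrow> (\<exists>n::int. x = y + of_int n)"
proof -
  have "expc x = expc y \<longleftrightarrow> sin (2*pi*x) = sin (2*pi*y) \<and> cos (2*pi*x) = cos (2*pi*y)"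
    by (auto simp: expc_def complex_eq_iff)
  also have "\<dots> \<longleftrightarrow> (\<exists>n::int. 2*pi*x = 2*pi*y + 2*pi*n)"
    by (rule sin_cos_eq_iff)
  also have "\<dots> \<longleftrightarrow> (\<exists>n::int. x = y + of_int n)"
    by (simp flip: distrib_left)
  finally show ?thesis .
qed

lemma expc_add_of_int [simp]: "expc (x + of_int n) = expc x"
  using expc_eq_iff by blast

lemma expc_add_1 [simp]: "expc (x + 1) = expc x"
  using expc_add_of_int [of x 1] by simp

lemma expc_in_S1 [simp]: "expc x \<in> S1"
  by (simp add: expc_def)

lemma S1_subset_range_expc: "S1 \<subseteq> range expc"
proof
  fix z :: complex assume "z \<in> S1"
  then have "z \<noteq> 0" by auto
  then have "expc (Arg z / (2*pi)) = z"
    using cis_Arg [of z] \<open>z \<in> S1\<close> by (simp add: expc_def sgn_div_norm)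
  then show "z \<in> range expc" by (metis rangeI)
qed

lemma circle_homeo_inj_on: "circle_homeo g \<Longrightarrow> inj_on g S1"
  unfolding circle_homeo_def by (metis homeomorphism_apply1 inj_on_inverseI)

lemma is_lift_add_of_int: "is_lift g G \<Longrightarrow> is_lift g (\<lambda>x. G x + of_int c)"
  by (auto simp: is_lift_def intro: continuous_intros)

lemma lifts_differ_by_int:
  assumes "is_lift g F" "is_lift g G"
  obtains c :: int where "G = (\<lambda>x. F x + of_int c)"
proof -
  have int_valued: "G x - F x \<in> \<int>" for x
  proof -
    have "expc (G x) = expc (F x)" using assms unfolding is_lift_def by metis
    then show ?thesis by (auto simp: expc_eq_iff)
  qed
  have "(\<lambda>x. G x - F x) constant_on UNIV"
  proof (rule continuous_discrete_range_constant)
    show "continuous_on UNIV (\<lambda>x. G x - F x)"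
      using assms by (auto simp: is_lift_def intro: continuous_on_diff)
    show "\<exists>e>0. \<forall>y. y \<in> UNIV \<and> G y - F y \<noteq> G x - F x \<longrightarrow> e \<le> norm (G y - F y - (G x - F x))"
      for x using int_valued by (intro exI [of _ 1]) (auto intro: Ints_nonzero_abs_ge1)
  qed simp
  then have "G x = F x + (G 0 - F 0)" for x
    unfolding constant_on_def by (metis UNIV_I add_diff_cancel_left' diff_add_cancel)
  moreover obtain c where "G 0 - F 0 = of_int c" using int_valued by (meson Ints_cases)
  ultimately show ?thesis using that by auto
qed

lemma strict_mono_lift_add_1:
  assumes lift: "is_lift g G" and mono: "strict_mono G" and inj: "inj_on g S1"
  shows "G (x + 1) = G x + 1"
proof -
  obtain n :: int where n: "G (x + 1) = G x + of_int n"
    using lift unfolding is_lift_def by (metis expc_add_1 expc_eq_iff)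
  have "n \<ge> 1" using n strict_monoD [OF mono, of x "x + 1"] by simp
  moreover have "\<not> n \<ge> 2"
  proof
    assume "n \<ge> 2"
    have "continuous_on {x..x + 1} G"
      using lift unfolding is_lift_def by (meson continuous_on_subset subset_UNIV)
    then obtain t where t: "x \<le> t" "t \<le> x + 1" "G t = G x + 1"
      using IVT' [of G x "G x + 1" "x + 1"] n \<open>n \<ge> 2\<close> by auto
    then have "x < t" "t < x + 1" using n \<open>n \<ge> 2\<close> by (auto simp: less_le)
    have "g (expc t) = g (expc x)"
      using lift t(3) unfolding is_lift_def by (metis expc_add_1)
    then have "expc t = expc x" using inj by (meson inj_on_def expc_in_S1)
    then obtain m :: int where "t = x + of_int m" by (auto simp: expc_eq_iff)
    with \<open>x < t\<close> \<open>t < x + 1\<close> show False by simp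
  qed
  ultimately show ?thesis using n by simp
qed

lemma add_1_imp_add_of_int:
  fixes G :: "real \<Rightarrow> real"
  assumes "\<And>x. G (x + 1) = G x + 1"
  shows "G (x + of_int n) = G x + of_int n"
proof (induction n rule: int_induct [of _ 0])
  case (step1 i)
  then show ?case using assms [of "x + of_int i"] by (simp add: add.assoc)
next
  case (step2 i)
  then show ?case using assms [of "x + of_int (i - 1)"] by (simp add: algebra_simps)
qed simp

lemma funpow_preserves_add_1:
  fixes G :: "real \<Rightarrow> real"
  assumes "\<And>x. G (x + 1) = G x + 1"
  shows "(G ^^ n) (x + 1) = (G ^^ n) x + 1"
  by (induction n) (simp_all add: assms)

lemma funpow_add_const_of_int:
  fixes G :: "real \<Rightarrow> real"
  assumes "\<And>x. G (x + 1) = G x + 1"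
  shows "((\<lambda>x. G x + of_int c) ^^ n) x = (G ^^ n) x + of_int (int n * c)"
proof (induction n)
  case (Suc n)
  have "((\<lambda>x. G x + of_int c) ^^ Suc n) x = G ((G ^^ n) x + of_int (int n * c)) + of_int c"
    using Suc.IH by simp
  also have "\<dots> = (G ^^ Suc n) x + of_int (int (Suc n) * c)"
    using add_1_imp_add_of_int [where G = G, OF assms, of "(G ^^ n) x" "int n * c"]
    by (simp add: algebra_simps)
  finally show ?case .
qed simp

lemma mono_add_1_dist_le:
  fixes G :: "real \<Rightarrow> real"
  assumes mono: "mono G" and add_1: "\<And>x. G (x + 1) = G x + 1"
  shows "\<bar>G y - G x\<bar> \<le> \<bar>y - x\<bar> + 1"
proof -
  define k where "k = \<lfloor>y - x\<rfloor>"
  have "x + of_int k \<le> y" "y \<le> x + of_int (k + 1)" unfolding k_def by linarith+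
  then have "G (x + of_int k) \<le> G y" "G y \<le> G (x + of_int (k + 1))"
    using mono by (auto dest: monoD)
  moreover have "G (x + of_int (k + 1)) = G x + of_int k + 1"
    using add_1_imp_add_of_int [where G = G, OF add_1, of x "k + 1"] by simp
  ultimately have "G x + of_int k \<le> G y" "G y \<le> G x + of_int k + 1"
    using add_1_imp_add_of_int [where G = G, OF add_1] by simp_all
  moreover have "of_int k \<le> y - x" "y - x < of_int k + 1" unfolding k_def by linarith+
  ultimately show ?thesis by linarith
qed

lemma mono_between:
  fixes G :: "real \<Rightarrow> real"
  assumes mono: "mono G" and t: "t \<in> {min x y..max x y}"
  shows "G t \<in> {min (G x) (G y)..max (G x) (G y)}"
proof (cases "x \<le> y")
  case True
  with t have "G x \<le> G t" "G t \<le> G y" using mono by (auto dest: monoD)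
  then show ?thesis by simp
next
  case False
  with t have "G y \<le> G t" "G t \<le> G x" using mono by (auto dest: monoD)
  then show ?thesis by simp
qed

lemma orientation_preserving_lift:
  assumes "orientation_preserving g" and lift: "is_lift g G"
  shows "strict_mono G" and "G (x + 1) = G x + 1"
proof -
  obtain F where F: "is_lift g F" "strict_mono F" and "circle_homeo g"
    using assms(1) unfolding orientation_preserving_def by blast
  obtain c where "G = (\<lambda>x. F x + of_int c)" using lifts_differ_by_int [OF F(1) lift] .
  then show mono: "strict_mono G" using F(2) by (simp add: strict_mono_def)
  show "G (x + 1) = G x + 1"
    using strict_mono_lift_add_1 [OF lift mono circle_homeo_inj_on [OF \<open>circle_homeo g\<close>]] .
qed

lemma orientation_preserving_has_lift:
  "orientation_preserving g \<Longrightarrow> is_lift g (SOME G. is_lift g G)"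
  unfolding orientation_preserving_def by (metis someI)

lemma frac_lim_eq_if_diff_tendsto_int:
  fixes a b :: "nat \<Rightarrow> real"
  assumes diff: "(\<lambda>n. a n - b n) \<longlonglongrightarrow> of_int k"
  shows "frac (lim a) = frac (lim b)"
proof (cases "convergent b")
  case True
  then have "(\<lambda>n. b n + (a n - b n)) \<longlonglongrightarrow> lim b + of_int k"
    using diff by (intro tendsto_add) (simp_all add: convergent_LIMSEQ_iff)
  then have "lim a = lim b + of_int k" by (simp add: limI)
  then show ?thesis by simp
next
  case False
  have "\<not> convergent a"
  proof
    assume "convergent a"
    then have "(\<lambda>n. a n - (a n - b n)) \<longlonglongrightarrow> lim a - of_int k"
      using diff by (intro tendsto_diff) (simp_all add: convergent_LIMSEQ_iff)
    with False show False by (simp add: convergent_def)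
  qed
  \<comment> \<open>Then both limits are the same junk value \<open>THE L. False\<close>.\<close>
  with False have "(\<lambda>L. a \<longlonglongrightarrow> L) = (\<lambda>L. b \<longlonglongrightarrow> L)"
    by (auto simp: convergent_def)
  then show ?thesis by (simp add: lim_def)
qed

lemma frac_lim_div_eq_if_bounded_diff:
  fixes u v :: "nat \<Rightarrow> real"
  assumes bounded: "\<And>n. \<bar>u n - v n - real n * of_int k\<bar> \<le> B"
  shows "frac (lim (\<lambda>n. u n / real n)) = frac (lim (\<lambda>n. v n / real n))"
proof (rule frac_lim_eq_if_diff_tendsto_int)
  have "(\<lambda>n. u n / real n - v n / real n - of_int k) \<longlonglongrightarrow> 0"
  proof (rule Lim_null_comparison [OF _ lim_const_over_n [of B]])
    show "\<forall>\<^sub>F n in sequentially. norm (u n / real n - v n / real n - of_int k) \<le> B / real n"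
    proof (rule eventually_sequentiallyI [of 1])
      fix n :: nat assume "1 \<le> n"
      then have "u n / real n - v n / real n - of_int k = (u n - v n - real n * of_int k) / real n"
        by (simp add: field_simps)
      then show "norm (u n / real n - v n / real n - of_int k) \<le> B / real n"
        using bounded [of n] by (simp add: divide_right_mono)
    qed
  qed
  then show "(\<lambda>n. u n / real n - v n / real n) \<longlonglongrightarrow> of_int k"
    by (simp add: LIM_zero_iff)
qed

lemma rotation_number_eq_if_orbits_close:
  assumes op1: "orientation_preserving g1" and op2: "orientation_preserving g2"
    and lift1: "is_lift g1 F1" and lift2: "is_lift g2 F2"
    and close: "\<And>n. \<bar>(F1 ^^ n) x - (F2 ^^ n) x\<bar> \<le> C"
  shows "rotation_number g1 = rotation_number g2"
proof -
  define G1 where "G1 = (SOME G. is_lift g1 G)"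
  define G2 where "G2 = (SOME G. is_lift g2 G)"
  have G1: "is_lift g1 G1" and G2: "is_lift g2 G2"
    unfolding G1_def G2_def using op1 op2 by (simp_all add: orientation_preserving_has_lift)
  obtain c1 where F1: "F1 = (\<lambda>t. G1 t + of_int c1)" using lifts_differ_by_int [OF G1 lift1] .
  obtain c2 where F2: "F2 = (\<lambda>t. G2 t + of_int c2)" using lifts_differ_by_int [OF G2 lift2] .
  have orbit_of_x: "\<bar>(G ^^ n) x - (G ^^ n) 0\<bar> \<le> \<bar>x\<bar> + 1"
    if "orientation_preserving g" "is_lift g G" for g G n
  proof (rule mono_add_1_dist_le [where G = "G ^^ n" and y = x and x = 0, simplified])
    show "mono (G ^^ n)"
      using that by (intro mono_pow strict_mono_mono orientation_preserving_lift)
    show "(G ^^ n) (y + 1) = (G ^^ n) y + 1" for y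
      using that by (intro funpow_preserves_add_1 orientation_preserving_lift)
  qed
  have "\<bar>(G1 ^^ n) 0 - (G2 ^^ n) 0 - real n * of_int (c2 - c1)\<bar> \<le> C + 2 * (\<bar>x\<bar> + 1)" for n
    using close [of n] orbit_of_x [OF op1 G1, of n] orbit_of_x [OF op2 G2, of n]
      funpow_add_const_of_int [where G = G1 and c = c1 and n = n and x = x]
      funpow_add_const_of_int [where G = G2 and c = c2 and n = n and x = x]
      orientation_preserving_lift(2) [OF op1 G1] orientation_preserving_lift(2) [OF op2 G2]
    unfolding F1 F2 by (simp add: algebra_simps)
  then show ?thesis
    unfolding rotation_number_def G1_def [symmetric] G2_def [symmetric]
    by (rule frac_lim_div_eq_if_bounded_diff)
qed

text \<open>The lift of \<open>A\<close> to \<open>\<real>\<close> is the collection of connected components of the sets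
  \<open>expc -` J\<close>, \<open>J \<in> A\<close>; this predicate says that \<open>x\<close> and \<open>y\<close> lie in one of them.\<close>

definition same_lifted_piece :: "complex set set \<Rightarrow> real \<Rightarrow> real \<Rightarrow> bool" where
  "same_lifted_piece A x y \<longleftrightarrow> (\<exists>J\<in>A. expc ` {min x y..max x y} \<subseteq> J)"

lemma same_lifted_piece_commute: "same_lifted_piece A x y \<longleftrightarrow> same_lifted_piece A y x"
  by (simp add: same_lifted_piece_def min.commute max.commute)

lemma same_lifted_piece_refl: "J \<in> A \<Longrightarrow> expc x \<in> J \<Longrightarrow> same_lifted_piece A x x"
  by (auto simp: same_lifted_piece_def)

lemma same_lifted_pieceE:
  assumes "same_lifted_piece A x y"
  obtains J where "J \<in> A" "expc x \<in> J" "expc y \<in> J"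
proof -
  obtain J where "J \<in> A" "expc ` {min x y..max x y} \<subseteq> J"
    using assms unfolding same_lifted_piece_def by blast
  moreover have "x \<in> {min x y..max x y}" "y \<in> {min x y..max x y}" by auto
  ultimately show ?thesis using that by blast
qed

lemma same_lifted_piece_add_of_int:
  assumes "same_lifted_piece A x y"
  shows "same_lifted_piece A (x + of_int n) (y + of_int n)"
proof -
  have "expc ` {min (x + of_int n) (y + of_int n)..max (x + of_int n) (y + of_int n)}
      \<subseteq> expc ` {min x y..max x y}"
  proof (rule image_subsetI)
    fix t assume "t \<in> {min (x + of_int n) (y + of_int n)..max (x + of_int n) (y + of_int n)}"
    then have "t - of_int n \<in> {min x y..max x y}" by (auto simp: min_def max_def)
    then show "expc t \<in> expc ` {min x y..max x y}"
      by (metis diff_add_cancel expc_add_of_int image_eqI)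
  qed
  then show ?thesis using assms unfolding same_lifted_piece_def by blast
qed

lemma same_lifted_piece_image:
  assumes lift: "is_lift g G" and maps_pieces: "\<forall>J\<in>A. g ` J \<in> A"
    and same: "same_lifted_piece A x y"
  shows "same_lifted_piece A (G x) (G y)"
proof -
  obtain J where J: "J \<in> A" "expc ` {min x y..max x y} \<subseteq> J"
    using same unfolding same_lifted_piece_def by blast
  have "connected (G ` {min x y..max x y})"
    using lift unfolding is_lift_def
    by (intro connected_continuous_image connected_Icc) (auto intro: continuous_on_subset)
  moreover have "G x \<in> G ` {min x y..max x y}" "G y \<in> G ` {min x y..max x y}" by auto
  ultimately have "{min (G x) (G y)..max (G x) (G y)} \<subseteq> G ` {min x y..max x y}"
    by (simp add: min_def max_def connected_contains_Icc)
  then have "expc ` {min (G x) (G y)..max (G x) (G y)} \<subseteq> expc ` G ` {min x y..max x y}"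
    by (rule image_mono)
  also have "\<dots> = g ` expc ` {min x y..max x y}"
    using lift unfolding is_lift_def by (auto simp: image_image)
  also have "\<dots> \<subseteq> g ` J" using J(2) by (rule image_mono)
  finally show ?thesis unfolding same_lifted_piece_def using maps_pieces J(1) by blast
qed

lemma same_lifted_piece_translate:
  assumes shape: "(\<exists>z. J = {z}) \<or> open_arc J" and "J \<in> A" "expc x \<in> J" "expc y \<in> J"
  obtains m :: int where "same_lifted_piece A x (y + of_int m)"
  using shape
proof
  assume "\<exists>z. J = {z}"
  then have "expc x = expc y" using assms(3,4) by auto
  then obtain m :: int where "x = y + of_int m" by (auto simp: expc_eq_iff)
  then show ?thesis using that same_lifted_piece_refl [OF assms(2,3)] by blast
next
  assume "open_arc J"
  then obtain a b where ab: "a < b" "b - a < 1" "J = expc ` {a<..<b}"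
    unfolding open_arc_def by blast
  obtain s where s: "a < s" "s < b" "expc x = expc s" using assms(3) ab(3) by auto
  obtain s' where s': "a < s'" "s' < b" "expc y = expc s'" using assms(4) ab(3) by auto
  obtain i j :: int where i: "x = s + of_int i" and j: "y = s' + of_int j"
    using s(3) s'(3) by (auto simp: expc_eq_iff)
  define y' where "y' = y + of_int (i - j)"
  \<comment> \<open>Both \<open>x\<close> and \<open>y'\<close> lie in the translate by \<open>i\<close> of the arc \<open>]a, b[\<close>.\<close>
  have "y' = s' + of_int i" unfolding y'_def j by simp
  have "expc ` {min x y'..max x y'} \<subseteq> J"
  proof (rule image_subsetI)
    fix t assume t: "t \<in> {min x y'..max x y'}"
    have "min s s' + of_int i \<le> t" "t \<le> max s s' + of_int i"
      using t i \<open>y' = s' + of_int i\<close> by (auto simp: min_def max_def)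
    moreover have "a < min s s'" "max s s' < b" using s s' by simp_all
    ultimately have "t - of_int i \<in> {a<..<b}" unfolding greaterThanLessThan_iff by linarith
    moreover have "expc t = expc (t - of_int i)" using expc_add_of_int [of "t - of_int i" i] by simp
    ultimately show "expc t \<in> J" using ab(3) by simp
  qed
  then show ?thesis using that assms(2) unfolding same_lifted_piece_def y'_def by blast
qed

lemma proper_piece_misses_point:
  assumes "(\<exists>z. J = {z}) \<or> open_arc J"
  obtains t where "expc t \<notin> J"
  using assms
proof
  assume "\<exists>z. J = {z}"
  then obtain z where "J = {z}" by blast
  moreover have "expc 0 \<noteq> expc (1/2)" by (simp add: expc_def)
  ultimately show ?thesis using that [of 0] that [of "1/2"] by (cases "expc 0 = z") simp_all
next
  assume "open_arc J"
  then obtain a b where ab: "a < b" "b - a < 1" "J = expc ` {a<..<b}"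
    unfolding open_arc_def by blast
  have "expc a \<notin> J"
  proof
    assume "expc a \<in> J"
    then obtain s where "a < s" "s < b" "expc a = expc s" using ab(3) by auto
    moreover from this obtain n :: int where "a = s + of_int n" by (auto simp: expc_eq_iff)
    ultimately have "0 < - n" "- n < 1" using ab(2) by linarith+
    then show False by simp
  qed
  then show ?thesis using that by blast
qed

locale circle_pieces =
  fixes A :: "complex set set"
  assumes pieces_in_S1: "\<forall>J\<in>A. J \<subseteq> S1"
    and disjoint_pieces: "disjoint A"
    and piece_shape: "\<forall>J\<in>A. (\<exists>z. J = {z}) \<or> open_arc J"
begin

lemma piece_eqI: "J \<in> A \<Longrightarrow> J' \<in> A \<Longrightarrow> z \<in> J \<Longrightarrow> z \<in> J' \<Longrightarrow> J = J'"
  using disjointD [OF disjoint_pieces] by blast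

lemma same_lifted_piece_glue:
  assumes "same_lifted_piece A x y" "same_lifted_piece A u v"
    and "{min x y..max x y} \<inter> {min u v..max u v} \<noteq> {}"
    and "{min a b..max a b} \<subseteq> {min x y..max x y} \<union> {min u v..max u v}"
  shows "same_lifted_piece A a b"
proof -
  obtain J where J: "J \<in> A" "expc ` {min x y..max x y} \<subseteq> J"
    using assms(1) unfolding same_lifted_piece_def by blast
  obtain J' where J': "J' \<in> A" "expc ` {min u v..max u v} \<subseteq> J'"
    using assms(2) unfolding same_lifted_piece_def by blast
  obtain t where "t \<in> {min x y..max x y}" "t \<in> {min u v..max u v}" using assms(3) by blast
  then have "expc t \<in> J" "expc t \<in> J'" using J(2) J'(2) by auto
  then have "J = J'" using piece_eqI [OF J(1) J'(1)] by blast
  have "expc ` {min a b..max a b} \<subseteq> expc ` ({min x y..max x y} \<union> {min u v..max u v})"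
    using assms(4) by (rule image_mono)
  also have "\<dots> \<subseteq> J" using J(2) J'(2) \<open>J = J'\<close> by (simp add: image_Un)
  finally show ?thesis using J(1) unfolding same_lifted_piece_def by blast
qed

lemma same_lifted_piece_trans:
  "same_lifted_piece A x y \<Longrightarrow> same_lifted_piece A y z \<Longrightarrow> same_lifted_piece A x z"
  by (rule same_lifted_piece_glue [of x y y z]) (auto simp: min_def max_def)

lemma same_lifted_piece_interleaved:
  assumes "same_lifted_piece A p p'" "same_lifted_piece A q q'" "p \<le> q" "q' \<le> p'"
  shows "same_lifted_piece A p q"
  using assms(1,2)
proof (rule same_lifted_piece_glue)
  show "{min p p'..max p p'} \<inter> {min q q'..max q q'} \<noteq> {}"
    using assms(3,4) by (cases "q \<le> p'") (auto simp: min_def max_def)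
  show "{min p q..max p q} \<subseteq> {min p p'..max p p'} \<union> {min q q'..max q q'}"
    using assms(3,4) by (auto simp: min_def max_def)
qed

lemma same_lifted_piece_dist_less_1:
  assumes "same_lifted_piece A x y"
  shows "\<bar>x - y\<bar> < 1"
proof (rule ccontr)
  assume "\<not> \<bar>x - y\<bar> < 1"
  obtain J where J: "J \<in> A" "expc ` {min x y..max x y} \<subseteq> J"
    using assms unfolding same_lifted_piece_def by blast
  have "(\<exists>z. J = {z}) \<or> open_arc J" using piece_shape J(1) by blast
  then obtain t where "expc t \<notin> J" by (rule proper_piece_misses_point)
  \<comment> \<open>An interval of length at least 1 contains a translate of every point.\<close>
  moreover have "t + of_int \<lceil>min x y - t\<rceil> \<in> {min x y..max x y}"
  proof -
    have "min x y + 1 \<le> max x y"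
      using \<open>\<not> \<bar>x - y\<bar> < 1\<close> by (auto simp: min_def max_def abs_if split: if_splits)
    moreover have "min x y \<le> t + of_int \<lceil>min x y - t\<rceil>" "t + of_int \<lceil>min x y - t\<rceil> < min x y + 1"
      by linarith+
    ultimately show ?thesis by simp
  qed
  then have "expc (t + of_int \<lceil>min x y - t\<rceil>) \<in> J" using J(2) by blast
  ultimately show False by simp
qed

lemma same_lifted_piece_preimage:
  assumes lift: "is_lift g G" and mono: "mono G" and maps_pieces: "\<forall>J\<in>A. g ` J \<in> A"
    and inj: "inj_on g S1" and same: "same_lifted_piece A (G x) (G y)"
    and x: "J \<in> A" "expc x \<in> J"
  shows "same_lifted_piece A x y"
proof -
  obtain K where K: "K \<in> A" "expc ` {min (G x) (G y)..max (G x) (G y)} \<subseteq> K"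
    using same unfolding same_lifted_piece_def by blast
  have G_expc: "expc (G t) = g (expc t)" for t using lift unfolding is_lift_def by metis
  have "expc (G x) \<in> K" using K(2) by auto
  moreover have "expc (G x) \<in> g ` J" using x(2) G_expc by auto
  moreover have "g ` J \<in> A" using maps_pieces x(1) by blast
  ultimately have K_eq: "K = g ` J" using piece_eqI [OF K(1)] by blast
  have "expc ` {min x y..max x y} \<subseteq> J"
  proof (rule image_subsetI)
    fix t assume "t \<in> {min x y..max x y}"
    then have "G t \<in> {min (G x) (G y)..max (G x) (G y)}" by (rule mono_between [OF mono])
    then have "expc (G t) \<in> K" using K(2) by blast
    then have "g (expc t) \<in> g ` J" using K_eq G_expc by simp
    moreover have "J \<subseteq> S1" using pieces_in_S1 x(1) by blast
    ultimately show "expc t \<in> J" using inj_on_image_mem_iff [OF inj expc_in_S1] by blast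
  qed
  then show ?thesis using x(1) unfolding same_lifted_piece_def by blast
qed

end

locale compatible_pair = circle_pieces +
  fixes g1 g2 :: "complex \<Rightarrow> complex" and F1 F2 :: "real \<Rightarrow> real"
  assumes orientation1: "orientation_preserving g1" and orientation2: "orientation_preserving g2"
    and lift1: "is_lift g1 F1" and lift2: "is_lift g2 F2"
    and maps_pieces: "\<forall>J\<in>A. g1 ` J \<in> A"
    and same_action: "\<forall>J\<in>A. g2 ` J = g1 ` J"
begin

lemmas F1_strict_mono = orientation_preserving_lift(1) [OF orientation1 lift1]
   and F2_strict_mono = orientation_preserving_lift(1) [OF orientation2 lift2]
   and F1_add_1 = orientation_preserving_lift(2) [OF orientation1 lift1]
   and F2_add_1 = orientation_preserving_lift(2) [OF orientation2 lift2]

lemma same_lifted_piece_up_to_translation: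
  assumes "J \<in> A" "expc y \<in> J"
  obtains m :: int where "same_lifted_piece A (F1 y) (F2 y + of_int m)"
proof (rule same_lifted_piece_translate)
  show "(\<exists>z. g1 ` J = {z}) \<or> open_arc (g1 ` J)" "g1 ` J \<in> A"
    using piece_shape maps_pieces assms(1) by blast+
  show "expc (F1 y) \<in> g1 ` J" "expc (F2 y) \<in> g1 ` J"
    using lift1 lift2 assms same_action unfolding is_lift_def by (metis imageI)+
qed

lemma same_lifted_piece_transfer:
  assumes z: "J \<in> A" "expc z \<in> J" and base: "same_lifted_piece A (F1 z) (F2 z)"
    and y: "same_lifted_piece A (F1 y) (F1 z)"
  shows "same_lifted_piece A (F1 y) (F2 y)"
proof -
  have "same_lifted_piece A z y"
    using same_lifted_piece_preimage [OF lift1 strict_mono_mono [OF F1_strict_mono] maps_pieces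
        circle_homeo_inj_on _ z] y orientation1
    by (simp add: same_lifted_piece_commute orientation_preserving_def)
  then have "same_lifted_piece A (F2 z) (F2 y)"
    using same_lifted_piece_image [OF lift2] same_action maps_pieces by simp
  then show ?thesis using y base by (blast intro: same_lifted_piece_trans)
qed

lemma same_lifted_piece_on_period:
  assumes base: "J0 \<in> A" "expc x0 \<in> J0" "same_lifted_piece A (F1 x0) (F2 x0)"
    and y: "J \<in> A" "expc y \<in> J" "x0 \<le> y" "y < x0 + 1"
  shows "same_lifted_piece A (F1 y) (F2 y)"
proof -
  obtain m where m: "same_lifted_piece A (F1 y) (F2 y + of_int m)"
    using same_lifted_piece_up_to_translation [OF y(1,2)] .
  have "F1 x0 \<le> F1 y" "F1 y \<le> F1 (x0 + 1)" "F2 x0 \<le> F2 y" "F2 y \<le> F2 (x0 + 1)"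
    using y(3,4) F1_strict_mono F2_strict_mono by (simp_all add: strict_mono_less_eq)
  \<comment> \<open>For \<open>m \<noteq> 0\<close> this piece straddles the one through \<open>F1 x0\<close> and \<open>F2 x0\<close> or its translate
    by 1, so it is that piece.\<close>
  consider "m = 0" | "m \<ge> 1" | "m \<le> -1" by linarith
  then show ?thesis
  proof cases
    case 1
    then show ?thesis using m by simp
  next
    case 2
    have base': "same_lifted_piece A (F1 (x0 + 1)) (F2 (x0 + 1))"
      using same_lifted_piece_add_of_int [OF base(3), of 1] F1_add_1 F2_add_1 by simp
    moreover have "F2 (x0 + 1) \<le> F2 y + of_int m" using 2 F2_add_1 \<open>F2 x0 \<le> F2 y\<close> by simp
    ultimately have "same_lifted_piece A (F1 y) (F1 (x0 + 1))"
      using same_lifted_piece_interleaved [OF m] \<open>F1 y \<le> F1 (x0 + 1)\<close> by blast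
    then show ?thesis using same_lifted_piece_transfer [OF base(1) _ base'] base(2) by simp
  next
    case 3
    have "F2 y + of_int m \<le> F2 x0" using 3 F2_add_1 \<open>F2 y \<le> F2 (x0 + 1)\<close> by simp
    then have "same_lifted_piece A (F1 x0) (F1 y)"
      using same_lifted_piece_interleaved [OF base(3) m] \<open>F1 x0 \<le> F1 y\<close> by blast
    then show ?thesis
      using same_lifted_piece_transfer [OF base] by (simp add: same_lifted_piece_commute)
  qed
qed

lemma same_lifted_piece_everywhere:
  assumes base: "J0 \<in> A" "expc x0 \<in> J0" "same_lifted_piece A (F1 x0) (F2 x0)"
    and y: "J \<in> A" "expc y \<in> J"
  shows "same_lifted_piece A (F1 y) (F2 y)"
proof -
  define j where "j = \<lfloor>y - x0\<rfloor>"
  define y' where "y' = y - of_int j"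
  have "expc y' \<in> J" using y(2) expc_add_of_int [of y' j] unfolding y'_def by simp
  moreover have "x0 \<le> y'" "y' < x0 + 1" unfolding y'_def j_def by linarith+
  ultimately have "same_lifted_piece A (F1 y') (F2 y')"
    using same_lifted_piece_on_period [OF base y(1)] by blast
  then have "same_lifted_piece A (F1 y' + of_int j) (F2 y' + of_int j)"
    by (rule same_lifted_piece_add_of_int)
  moreover have "F1 y' + of_int j = F1 y" "F2 y' + of_int j = F2 y"
    using add_1_imp_add_of_int [where G = F1, OF F1_add_1, of y' j]
      add_1_imp_add_of_int [where G = F2, OF F2_add_1, of y' j]
    unfolding y'_def by simp_all
  ultimately show ?thesis by simp
qed

lemma same_lifted_piece_iterates:
  assumes base: "J0 \<in> A" "expc x0 \<in> J0" "same_lifted_piece A (F1 x0) (F2 x0)"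
  shows "same_lifted_piece A ((F1 ^^ n) x0) ((F2 ^^ n) x0)"
proof (induction n)
  case 0
  show ?case using same_lifted_piece_refl [OF base(1,2)] by simp
next
  case (Suc n)
  let ?u = "(F1 ^^ n) x0" and ?v = "(F2 ^^ n) x0"
  obtain J where "J \<in> A" "expc ?v \<in> J" using Suc.IH by (rule same_lifted_pieceE)
  then have "same_lifted_piece A (F1 ?v) (F2 ?v)"
    by (rule same_lifted_piece_everywhere [OF base])
  moreover have "same_lifted_piece A (F1 ?u) (F1 ?v)"
    using same_lifted_piece_image [OF lift1 maps_pieces Suc.IH] .
  ultimately show ?case by (simp add: same_lifted_piece_trans)
qed

lemma rotation_number_eq:
  assumes "J0 \<in> A" "expc x0 \<in> J0" "same_lifted_piece A (F1 x0) (F2 x0)"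
  shows "rotation_number g1 = rotation_number g2"
proof (rule rotation_number_eq_if_orbits_close [OF orientation1 orientation2 lift1 lift2])
  show "\<bar>(F1 ^^ n) x0 - (F2 ^^ n) x0\<bar> \<le> 1" for n
    using same_lifted_piece_dist_less_1 [OF same_lifted_piece_iterates [OF assms, of n]] by simp
qed

end

theorem mainTheorem4:
  fixes A :: "complex set set" and h :: "complex set \<Rightarrow> complex set"
    and g1 g2 :: "complex \<Rightarrow> complex"
  assumes sub: "\<forall>J\<in>A. J \<subseteq> S1"
    and disj: "disjoint A"
    and nonempty: "\<forall>J\<in>A. J \<noteq> {}"
    and conn: "\<forall>J\<in>A. connected J"
    and card3: "infinite A \<or> card A \<ge> 3"
    and dense: "S1 \<subseteq> closure (\<Union>A)"
    and shape: "\<forall>J\<in>A. (\<exists>z. J = {z}) \<or> open_arc J"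
    and hbij: "bij_betw h A A"
    and hord: "order_preserving A h"
    and g1: "orientation_preserving g1" "compatible g1 A h"
    and g2: "orientation_preserving g2" "compatible g2 A h"
  shows "rotation_number g1 = rotation_number g2"
proof -
  obtain G1 where lift1: "is_lift g1 G1" using g1(1) unfolding orientation_preserving_def by blast
  obtain G2 where lift2: "is_lift g2 G2" using g2(1) unfolding orientation_preserving_def by blast
  have action: "g1 ` J = h J" "g2 ` J = h J" if "J \<in> A" for J
    using g1(2) g2(2) that unfolding compatible_def by blast+
  have pair: "compatible_pair A g1 g2 G1 F2" if "is_lift g2 F2" for F2
    by unfold_locales
      (use sub disj shape g1(1) g2(1) lift1 that action hbij in \<open>simp_all add: bij_betw_apply\<close>)
  obtain J0 where "J0 \<in> A" using card3 by fastforce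
  moreover obtain z where "z \<in> J0" using nonempty \<open>J0 \<in> A\<close> by blast
  moreover obtain x0 where "expc x0 = z" using S1_subset_range_expc sub \<open>J0 \<in> A\<close> \<open>z \<in> J0\<close> by blast
  ultimately have J0: "J0 \<in> A" "expc x0 \<in> J0" by simp_all
  obtain k where "same_lifted_piece A (G1 x0) (G2 x0 + of_int k)"
    using compatible_pair.same_lifted_piece_up_to_translation [OF pair [OF lift2] J0] .
  then show ?thesis
    using compatible_pair.rotation_number_eq [OF pair [OF is_lift_add_of_int [OF lift2]] J0] by simp
qed

end
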